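(* Let $\lambda=(\lambda_1\ge\lambda_2\ge\cdots\ge\lambda_n\ge0)$ be integers and $a_k=\lambda_k-\lambda_{k+1}$ ($1\le k\le n$, $\lambda_{n+1}=0$). The linear map $\phi$ sending an $n\times n$ integer matrix $(a_{ij})$ to the array $(\lambda_{ij})_{i+j\le n+1}$ with $\lambda_{ij}=\sum_{l=j}^{n+1-i}a_{il}$ restricts to a bijection from $\Upsilon_\lambda$ onto $\Pi_\lambda$. In particular, $\phi$ identifies $\mathrm{conv}(\Upsilon_\lambda)$ with the Gel'fand–Cetlin polytope $P_\lambda$.
   Context: For $I=\{i_1<\cdots<i_k\}\subseteq\{1,\ldots,n\}$, $\alpha_I\in\mathbb{Z}^{n\times n}$ is the exponent matrix of the antidiagonal monomial $\prod_{r=1}^kz_{r,i_{k+1-r}}$ of the minor of the generic matrix $(z_{ij})$ with rows $1,\ldots,k$ and columns $I$ (so $\alpha_I$ has entry $1$ at positions $(r,i_{k+1-r})$, $r=1,\ldots,k$, and $0$ elsewhere). $\Upsilon_\lambda$ is the set of all matrices $\sum_{s}\alpha_{I_s}$, where $(I_s)_s$ is a finite list of nonempty subsets of $\{1,\ldots,n\}$ containing exactly $a_k$ subsets of size $k$ for each $k$. A Gel'fand–Cetlin pattern for $\lambda$ is a real array $(\lambda_{i,j})_{i,j\ge1,\,i+j\le n+1}$ with $\lambda_{i,1}=\lambda_i$ for all $i$ and $\lambda_{i,j}\ge\lambda_{i,j+1}\ge\lambda_{i+1,j}$ whenever these entries are defined. $\Pi_\lambda$ is the set of integer Gel'fand–Cetlin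 patterns for $\lambda$, and the Gel'fand–Cetlin polytope is $P_\lambda=\mathrm{conv}(\Pi_\lambda)$. *)

theory Defs
  imports "HOL-Analysis.Analysis"
begin

text \<open>All arrays are functions nat => nat => 'a, 1-indexed; entries outside the
relevant index range are required to be 0, so that sets of arrays are faithful.\<close>

text \<open>alpha I: exponent matrix of the antidiagonal monomial of the minor with rows
1..k and columns I = {i_1 < ... < i_k}: entry 1 at (r, i_(k+1-r)), r = 1..k.\<close>
definition alpha :: "nat set \<Rightarrow> nat \<Rightarrow> nat \<Rightarrow> int" where
  "alpha I r c = (if 1 \<le> r \<and> r \<le> card I \<and> c = sorted_list_of_set I ! (card I - r)
                  then 1 else 0)"

definition amult :: "nat \<Rightarrow> (nat \<Rightarrow> int) \<Rightarrow> nat \<Rightarrow> int" where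
  "amult n lam k = lam k - (if k = n then 0 else lam (k + 1))"

definition Upsilon :: "nat \<Rightarrow> (nat \<Rightarrow> int) \<Rightarrow> (nat \<Rightarrow> nat \<Rightarrow> int) set" where
  "Upsilon n lam = {M. \<exists>Is :: nat set list.
      (\<forall>I\<in>set Is. I \<noteq> {} \<and> I \<subseteq> {1..n}) \<and>
      (\<forall>k\<in>{1..n}. int (length (filter (\<lambda>I. card I = k) Is)) = amult n lam k) \<and>
      M = (\<lambda>r c. sum_list (map (\<lambda>I. alpha I r c) Is))}"

definition GC_Pi :: "nat \<Rightarrow> (nat \<Rightarrow> int) \<Rightarrow> (nat \<Rightarrow> nat \<Rightarrow> int) set" where
  "GC_Pi n lam = {P. (\<forall>i j. \<not> (1 \<le> i \<and> 1 \<le> j \<and> i + j \<le> n + 1) \<longrightarrow> P i j = 0) \<and>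
      (\<forall>i\<in>{1..n}. P i 1 = lam i) \<and>
      (\<forall>i j. 1 \<le> i \<and> 1 \<le> j \<and> i + j + 1 \<le> n + 1 \<longrightarrow>
               P i j \<ge> P i (j + 1) \<and> P i (j + 1) \<ge> P (i + 1) j)}"

definition phi :: "nat \<Rightarrow> (nat \<Rightarrow> nat \<Rightarrow> 'a::comm_monoid_add) \<Rightarrow> nat \<Rightarrow> nat \<Rightarrow> 'a" where
  "phi n M = (\<lambda>i j. if 1 \<le> i \<and> 1 \<le> j \<and> i + j \<le> n + 1
                     then (\<Sum>l = j..n + 1 - i. M i l) else 0)"

definition realarr :: "(nat \<Rightarrow> nat \<Rightarrow> int) \<Rightarrow> nat \<Rightarrow> nat \<Rightarrow> real" where
  "realarr M = (\<lambda>i j. real_of_int (M i j))"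

definition conv_arr :: "(nat \<Rightarrow> nat \<Rightarrow> real) set \<Rightarrow> (nat \<Rightarrow> nat \<Rightarrow> real) set" where
  "conv_arr S = {x. \<exists>ps :: (real \<times> (nat \<Rightarrow> nat \<Rightarrow> real)) list.
      ps \<noteq> [] \<and> (\<forall>(c, p)\<in>set ps. 0 \<le> c \<and> p \<in> S) \<and>
      sum_list (map fst ps) = 1 \<and>
      x = (\<lambda>i j. sum_list (map (\<lambda>(c, p). c * p i j) ps))}"

end

theory Submission
  imports Defs
begin

text \<open>Under phi, the antidiagonal matrix alpha I of a k-subset I = {i_1 < ... < i_k}
  becomes the 0/1 indicator of a staircase whose row r is filled up to column i_(k+1-r).
  Staircase indicators are interlacing, and the first column of phi applied to a sum of
  such matrices counts the sets of size at least i, which telescopes against the a_k.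
  Conversely, the positive entries of a nonnegative interlacing pattern always form such a
  staircase, and subtracting its indicator (i.e. decrementing every positive entry) keeps
  the pattern interlacing, so patterns decompose by peeling off staircases; nonnegativity
  of the patterns comes from lambda_n \<ge> 0 along the last antidiagonal. Finally, phi is
  inverted on triangular arrays by differences along rows and commutes with convex
  combinations, which transfers the bijection to the convex hulls.\<close>

section \<open>Triangular arrays and the map phi\<close>

abbreviation in_triangle :: "nat \<Rightarrow> nat \<Rightarrow> nat \<Rightarrow> bool" where
  "in_triangle n i j \<equiv> 1 \<le> i \<and> 1 \<le> j \<and> i + j \<le> n + 1"

definition triangular :: "nat \<Rightarrow> (nat \<Rightarrow> nat \<Rightarrow> 'a::zero) \<Rightarrow> bool" where
  "triangular n x \<longleftrightarrow> (\<forall>i j. \<not> in_triangle n i j \<longrightarrow> x i j = 0)"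

lemma triangular_in_triangle: "triangular n x \<Longrightarrow> x i j \<noteq> 0 \<Longrightarrow> in_triangle n i j"
  unfolding triangular_def by blast

lemma triangular_realarr: "triangular n M \<Longrightarrow> triangular n (realarr M)"
  by (simp add: triangular_def realarr_def)

lemma phi_realarr: "phi n (realarr M) = realarr (phi n M)"
  by (auto simp: phi_def realarr_def fun_eq_iff)

lemma phi_add: "phi n (\<lambda>i j. x i j + y i j) = (\<lambda>i j. phi n x i j + phi n y i j)"
  by (auto simp: phi_def fun_eq_iff sum.distrib)

lemma phi_sum_list:
  "phi n (\<lambda>i j. \<Sum>a\<leftarrow>as. x a i j) = (\<lambda>i j. \<Sum>a\<leftarrow>as. phi n (x a) i j)"
proof (induction as)
  case Nil
  show ?case by (simp add: phi_def fun_eq_iff)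
next
  case (Cons a as)
  then show ?case by (simp add: phi_add)
qed

lemma phi_diff:
  fixes x :: "nat \<Rightarrow> nat \<Rightarrow> 'a::ab_group_add"
  assumes "in_triangle n i j"
  shows "phi n x i j - phi n x i (j + 1) = x i j"
proof (cases "i + j \<le> n")
  case True
  with assms show ?thesis by (simp add: phi_def sum.atLeast_Suc_atMost)
next
  case False
  with assms have "n + 1 - i = j" by linarith
  with assms show ?thesis by (simp add: phi_def)
qed

lemma inj_on_phi_triangular:
  "inj_on (phi n) {x :: nat \<Rightarrow> nat \<Rightarrow> 'a::ab_group_add. triangular n x}"
proof (rule inj_onI, intro ext)
  fix x y :: "nat \<Rightarrow> nat \<Rightarrow> 'a" and i j
  assume "x \<in> {x. triangular n x}" "y \<in> {x. triangular n x}" "phi n x = phi n y"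
  then show "x i j = y i j"
  proof (cases "in_triangle n i j")
    case True
    then show ?thesis using phi_diff[OF True, of x] phi_diff[OF True, of y] \<open>phi n x = phi n y\<close>
      by simp
  qed (auto simp: triangular_def)
qed

section \<open>Convex hulls\<close>

definition lincomb :: "(real \<times> (nat \<Rightarrow> nat \<Rightarrow> real)) list \<Rightarrow> nat \<Rightarrow> nat \<Rightarrow> real" where
  "lincomb ps = (\<lambda>i j. \<Sum>(c, p)\<leftarrow>ps. c * p i j)"

lemma lincomb_Cons: "lincomb ((c, p) # ps) = (\<lambda>i j. c * p i j + lincomb ps i j)"
  by (simp add: lincomb_def)

lemma conv_arr_iff:
  "x \<in> conv_arr S \<longleftrightarrow> (\<exists>ps. ps \<noteq> [] \<and> (\<forall>(c, p)\<in>set ps. 0 \<le> c \<and> p \<in> S) \<and>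
     sum_list (map fst ps) = 1 \<and> x = lincomb ps)"
  by (simp add: conv_arr_def lincomb_def)

lemma phi_lincomb: "phi n (lincomb ps) = lincomb (map (apsnd (phi n)) ps)"
proof (induction ps)
  case Nil
  show ?case by (simp add: phi_def lincomb_def fun_eq_iff)
next
  case (Cons cp ps)
  obtain c p where cp: "cp = (c, p)" by fastforce
  have scale: "phi n (\<lambda>i j. c * p i j) = (\<lambda>i j. c * phi n p i j)"
    by (auto simp: phi_def sum_distrib_left fun_eq_iff)
  have "phi n (lincomb (cp # ps)) = (\<lambda>i j. phi n (\<lambda>i j. c * p i j) i j + phi n (lincomb ps) i j)"
    by (simp only: cp lincomb_Cons phi_add)
  also have "\<dots> = (\<lambda>i j. c * phi n p i j + lincomb (map (apsnd (phi n)) ps) i j)"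
    by (simp only: scale Cons.IH)
  also have "\<dots> = lincomb (map (apsnd (phi n)) (cp # ps))"
    by (simp only: cp lincomb_Cons list.map apsnd_conv)
  finally show ?case .
qed

lemma triangular_lincomb:
  "\<forall>(c, p)\<in>set ps. triangular n p \<Longrightarrow> triangular n (lincomb ps)"
proof (induction ps)
  case Nil
  show ?case by (simp add: triangular_def lincomb_def)
next
  case (Cons cp ps)
  then show ?case by (cases cp) (simp add: triangular_def lincomb_Cons)
qed

lemma conv_arr_triangular:
  assumes "\<forall>p\<in>S. triangular n p" and "x \<in> conv_arr S"
  shows "triangular n x"
proof -
  obtain ps where ps: "\<forall>(c, p)\<in>set ps. 0 \<le> c \<and> p \<in> S" "x = lincomb ps"
    using assms(2) unfolding conv_arr_iff by blast
  have "\<forall>(c, p)\<in>set ps. triangular n p" using ps(1) assms(1) by auto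
  then show ?thesis unfolding ps(2) by (rule triangular_lincomb)
qed

lemma conv_arr_linear_image:
  assumes linear: "\<And>ps. L (lincomb ps) = lincomb (map (apsnd L) ps)"
  shows "L ` conv_arr S = conv_arr (L ` S)"
proof
  show "L ` conv_arr S \<subseteq> conv_arr (L ` S)"
  proof
    fix y assume "y \<in> L ` conv_arr S"
    then obtain x where "x \<in> conv_arr S" "y = L x" by blast
    then obtain ps where ps: "ps \<noteq> []" "\<forall>(c, p)\<in>set ps. 0 \<le> c \<and> p \<in> S"
      "sum_list (map fst ps) = 1" "y = L (lincomb ps)"
      unfolding conv_arr_iff by blast
    have "map (apsnd L) ps \<noteq> []" using ps(1) by simp
    moreover have "\<forall>(c, q)\<in>set (map (apsnd L) ps). 0 \<le> c \<and> q \<in> L ` S"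
      using ps(2) by auto
    moreover have "sum_list (map fst (map (apsnd L) ps)) = 1" using ps(3) by simp
    moreover have "y = lincomb (map (apsnd L) ps)" using ps(4) linear by simp
    ultimately show "y \<in> conv_arr (L ` S)" unfolding conv_arr_iff by blast
  qed
next
  show "conv_arr (L ` S) \<subseteq> L ` conv_arr S"
  proof
    fix y assume "y \<in> conv_arr (L ` S)"
    then obtain qs where qs: "qs \<noteq> []" "\<forall>(c, q)\<in>set qs. 0 \<le> c \<and> q \<in> L ` S"
      "sum_list (map fst qs) = 1" "y = lincomb qs"
      unfolding conv_arr_iff by blast
    define ps where "ps = map (apsnd (inv_into S L)) qs"
    have "ps \<noteq> []" using qs(1) by (simp add: ps_def)
    moreover have "\<forall>(c, p)\<in>set ps. 0 \<le> c \<and> p \<in> S"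
      using qs(2) by (auto simp: ps_def inv_into_into)
    moreover have "sum_list (map fst ps) = 1" using qs(3) by (simp add: ps_def)
    ultimately have "lincomb ps \<in> conv_arr S" unfolding conv_arr_iff by blast
    moreover have "map (apsnd L) ps = qs"
      unfolding ps_def map_map
    proof (rule map_idI)
      fix cq assume "cq \<in> set qs"
      with qs(2) show "(apsnd L \<circ> apsnd (inv_into S L)) cq = cq"
        by (cases cq) (auto simp: f_inv_into_f)
    qed
    then have "y = L (lincomb ps)" using qs(4) linear by simp
    ultimately show "y \<in> L ` conv_arr S" by blast
  qed
qed

section \<open>Interlacing arrays\<close>

definition interlacing :: "nat \<Rightarrow> (nat \<Rightarrow> nat \<Rightarrow> int) \<Rightarrow> bool" where
  "interlacing n P \<longleftrightarrow> triangular n P \<and>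
     (\<forall>i j. 1 \<le> i \<and> 1 \<le> j \<and> i + j + 1 \<le> n + 1 \<longrightarrow>
        P i (j + 1) \<le> P i j \<and> P (i + 1) j \<le> P i (j + 1))"

lemma interlacing_triangular: "interlacing n P \<Longrightarrow> triangular n P"
  by (simp add: interlacing_def)

lemma GC_Pi_iff: "P \<in> GC_Pi n lam \<longleftrightarrow> interlacing n P \<and> (\<forall>i\<in>{1..n}. P i 1 = lam i)"
  by (auto simp: GC_Pi_def interlacing_def triangular_def)

lemma interlacing_zero: "interlacing n (\<lambda>_ _. 0)"
  by (simp add: interlacing_def triangular_def)

lemma interlacing_add:
  "interlacing n P \<Longrightarrow> interlacing n Q \<Longrightarrow> interlacing n (\<lambda>i j. P i j + Q i j)"
  by (simp add: interlacing_def triangular_def add_mono)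

lemma interlacing_sum_list:
  "\<forall>a\<in>set as. interlacing n (P a) \<Longrightarrow> interlacing n (\<lambda>i j. \<Sum>a\<leftarrow>as. P a i j)"
  by (induction as) (simp_all add: interlacing_zero interlacing_add)

lemma interlacing_row_antimono:
  assumes P: "interlacing n P" and "1 \<le> i" "1 \<le> j" "i + j' \<le> n + 1"
  shows "j \<le> j' \<Longrightarrow> P i j' \<le> P i j"
proof (induction j' rule: dec_induct)
  case (step m)
  with assms have "P i (m + 1) \<le> P i m" unfolding interlacing_def by auto
  with step show ?case by simp
qed simp

lemma interlacing_col_antimono:
  assumes P: "interlacing n P" and "1 \<le> i" "1 \<le> j" "i' + j \<le> n + 1"
  shows "i \<le> i' \<Longrightarrow> P i' j \<le> P i j"
proof (induction i' rule: dec_induct)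
  case (step m)
  with assms have "P (m + 1) j \<le> P m (j + 1)" "P m (j + 1) \<le> P m j"
    unfolding interlacing_def by auto
  with step show ?case by simp
qed simp

lemma interlacing_le_corner:
  assumes P: "interlacing n P" and "in_triangle n i j"
  shows "P i j \<le> P 1 1"
proof -
  have "P i j \<le> P i 1" using interlacing_row_antimono[OF P] assms by simp
  also have "\<dots> \<le> P 1 1" using interlacing_col_antimono[OF P] assms by simp
  finally show ?thesis .
qed

lemma interlacing_antidiagonal:
  assumes P: "interlacing n P" and "1 \<le> i"
  shows "i \<le> n \<Longrightarrow> P n 1 \<le> P i (n + 1 - i)"
proof (induction i rule: inc_induct)
  case (step m)
  with assms have "P (m + 1) (n - m) \<le> P m (n - m + 1)"
    unfolding interlacing_def by auto
  moreover have "n + 1 - Suc m = n - m" "n + 1 - m = n - m + 1" using step(2) by auto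
  ultimately show ?case using step(3) by simp
qed simp

lemma interlacing_nonneg:
  assumes P: "interlacing n P" and corner: "1 \<le> n \<longrightarrow> 0 \<le> P n 1"
  shows "0 \<le> P i j"
proof (cases "in_triangle n i j")
  case True
  then have "P n 1 \<le> P i (n + 1 - i)" using interlacing_antidiagonal[OF P] by simp
  also have "\<dots> \<le> P i j" using interlacing_row_antimono[OF P, of i j "n + 1 - i"] True by force
  finally show ?thesis using corner True by simp
next
  case False
  with P show ?thesis by (simp add: interlacing_def triangular_def)
qed

section \<open>Staircases\<close>

definition col_chain :: "nat \<Rightarrow> nat \<Rightarrow> (nat \<Rightarrow> nat) \<Rightarrow> bool" where
  "col_chain n k col \<longleftrightarrow> (\<forall>r\<in>{1..k}. in_triangle n r (col r)) \<and>
     (\<forall>r. 1 \<le> r \<and> r < k \<longrightarrow> col (r + 1) < col r)"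

definition chain_matrix :: "nat \<Rightarrow> (nat \<Rightarrow> nat) \<Rightarrow> nat \<Rightarrow> nat \<Rightarrow> int" where
  "chain_matrix k col = (\<lambda>r c. of_bool (r \<in> {1..k} \<and> c = col r))"

definition in_staircase :: "nat \<Rightarrow> (nat \<Rightarrow> nat) \<Rightarrow> nat \<Rightarrow> nat \<Rightarrow> bool" where
  "in_staircase k col i j \<longleftrightarrow> i \<in> {1..k} \<and> 1 \<le> j \<and> j \<le> col i"

lemma col_chain_in_triangle: "col_chain n k col \<Longrightarrow> r \<in> {1..k} \<Longrightarrow> in_triangle n r (col r)"
  unfolding col_chain_def by blast

lemma col_chain_less:
  assumes ch: "col_chain n k col" and "1 \<le> r"
  shows "Suc r \<le> r' \<Longrightarrow> r' \<le> k \<Longrightarrow> col r' < col r"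
proof (induction r' rule: dec_induct)
  case base
  with assms show ?case by (simp add: col_chain_def)
next
  case (step m)
  with assms have "col (m + 1) < col m" by (simp add: col_chain_def)
  with step show ?case by simp
qed

lemma triangular_chain_matrix: "col_chain n k col \<Longrightarrow> triangular n (chain_matrix k col)"
  by (auto simp: triangular_def chain_matrix_def col_chain_def)

lemma phi_chain_matrix:
  assumes ch: "col_chain n k col"
  shows "phi n (chain_matrix k col) = (\<lambda>i j. of_bool (in_staircase k col i j))"
proof (intro ext)
  fix i j
  show "phi n (chain_matrix k col) i j = of_bool (in_staircase k col i j)"
  proof (cases "i \<in> {1..k} \<and> in_triangle n i j")
    case True
    with col_chain_in_triangle[OF ch, of i] have ci: "in_triangle n i (col i)" by simp
    from True have "phi n (chain_matrix k col) i j = (\<Sum>l = j..n + 1 - i. of_bool (l = col i))"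
      by (simp add: phi_def chain_matrix_def)
    also have "\<dots> = of_bool (col i \<in> {j..n + 1 - i})"
      by (simp add: sum.delta')
    finally show ?thesis using True ci by (auto simp: in_staircase_def)
  next
    case False
    have "\<not> in_staircase k col i j"
    proof
      assume "in_staircase k col i j"
      then have "i \<in> {1..k}" "1 \<le> j" "j \<le> col i" by (simp_all add: in_staircase_def)
      with col_chain_in_triangle[OF ch \<open>i \<in> {1..k}\<close>] False show False by simp
    qed
    with False show ?thesis by (auto simp: phi_def chain_matrix_def)
  qed
qed

lemma interlacing_staircase:
  assumes ch: "col_chain n k col"
  shows "interlacing n (\<lambda>i j. of_bool (in_staircase k col i j))"
proof -
  have "col (i + 1) < col i" if "1 \<le> i" "i + 1 \<le> k" for i
    using ch that by (simp add: col_chain_def)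
  moreover have "i + col i \<le> n + 1" if "i \<in> {1..k}" for i
    using col_chain_in_triangle[OF ch that] by simp
  ultimately show ?thesis
    by (fastforce simp: interlacing_def triangular_def in_staircase_def)
qed

definition antidiag_cols :: "nat set \<Rightarrow> nat \<Rightarrow> nat" where
  "antidiag_cols I = (\<lambda>r. sorted_list_of_set I ! (card I - r))"

lemma alpha_eq_chain_matrix: "alpha I = chain_matrix (card I) (antidiag_cols I)"
  by (auto simp: alpha_def chain_matrix_def antidiag_cols_def fun_eq_iff)

lemma strict_sorted_nth_add:
  fixes s :: "nat list"
  assumes "sorted_wrt (<) s"
  shows "m + d < length s \<Longrightarrow> s ! m + d \<le> s ! (m + d)"
proof (induction d)
  case (Suc d)
  then have "s ! (m + d) < s ! (m + Suc d)"
    using sorted_wrt_nth_less[OF assms, of "m + d" "m + Suc d"] by simp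
  with Suc show ?case by simp
qed simp

lemma col_chain_antidiag_cols:
  assumes sub: "I \<subseteq> {1..n}"
  shows "col_chain n (card I) (antidiag_cols I)"
proof -
  define s where "s = sorted_list_of_set I"
  define k where "k = card I"
  have fin: "finite I" using sub finite_subset by blast
  have len: "length s = k" and srt: "sorted_wrt (<) s" and set_s: "set s = I"
    using fin by (simp_all add: s_def k_def)
  have mem: "1 \<le> s ! m \<and> s ! m \<le> n" if "m < k" for m
  proof -
    have "s ! m \<in> I" using nth_mem[of m s] that len set_s by simp
    with sub show ?thesis by auto
  qed
  have "in_triangle n r (s ! (k - r))" if "r \<in> {1..k}" for r
  proof -
    have "s ! (k - r) + (r - 1) \<le> s ! (k - 1)"
      using strict_sorted_nth_add[OF srt, of "k - r" "r - 1"] that len by simp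
    moreover have "s ! (k - 1) \<le> n" "1 \<le> s ! (k - r)"
      using mem[of "k - 1"] mem[of "k - r"] that by auto
    ultimately show ?thesis using that by simp
  qed
  moreover have "s ! (k - (r + 1)) < s ! (k - r)" if "1 \<le> r" "r < k" for r
    using sorted_wrt_nth_less[OF srt, of "k - (r + 1)" "k - r"] that len by simp
  ultimately have "col_chain n k (\<lambda>r. s ! (k - r))"
    unfolding col_chain_def by blast
  then show ?thesis by (simp add: antidiag_cols_def s_def k_def)
qed

lemma sorted_list_of_set_chain:
  assumes ch: "col_chain n k col"
  shows "sorted_list_of_set (col ` {1..k}) = map (\<lambda>m. col (k - m)) [0..<k]"
proof -
  define l where "l = map (\<lambda>m. col (k - m)) [0..<k]"
  have "sorted_wrt (<) l"
    unfolding sorted_wrt_iff_nth_less l_def using col_chain_less[OF ch] by auto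
  then have "sorted_list_of_set (set l) = l"
    by (simp add: sorted_list_of_set_sort_remdups strict_sorted_iff distinct_remdups_id sorted_sort_id)
  moreover have "set l = col ` {1..k}"
  proof
    show "col ` {1..k} \<subseteq> set l"
    proof
      fix x assume "x \<in> col ` {1..k}"
      then obtain r where "r \<in> {1..k}" "x = col r" by auto
      then have "x = col (k - (k - r))" "k - r \<in> {0..<k}" by auto
      then show "x \<in> set l" unfolding l_def by force
    qed
  qed (auto simp: l_def)
  ultimately show ?thesis by (simp add: l_def)
qed

lemma col_chain_image:
  assumes ch: "col_chain n k col"
  shows "col ` {1..k} \<subseteq> {1..n}" and "alpha (col ` {1..k}) = chain_matrix k col"
proof -
  have sl: "sorted_list_of_set (col ` {1..k}) = map (\<lambda>m. col (k - m)) [0..<k]"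
    by (rule sorted_list_of_set_chain[OF ch])
  show "col ` {1..k} \<subseteq> {1..n}"
  proof
    fix c assume "c \<in> col ` {1..k}"
    then obtain r where "r \<in> {1..k}" "c = col r" by blast
    with col_chain_in_triangle[OF ch] show "c \<in> {1..n}" by fastforce
  qed
  have card_eq: "card (col ` {1..k}) = k"
    using arg_cong[OF sl, of length] by simp
  show "alpha (col ` {1..k}) = chain_matrix k col"
    unfolding alpha_def chain_matrix_def card_eq sl by (auto simp: fun_eq_iff)
qed

section \<open>From subsets to patterns\<close>

definition alpha_sum :: "nat set list \<Rightarrow> nat \<Rightarrow> nat \<Rightarrow> int" where
  "alpha_sum Is = (\<lambda>r c. \<Sum>I\<leftarrow>Is. alpha I r c)"

lemma Upsilon_iff:
  "M \<in> Upsilon n lam \<longleftrightarrow> (\<exists>Is. (\<forall>I\<in>set Is. I \<noteq> {} \<and> I \<subseteq> {1..n}) \<and>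
     (\<forall>k\<in>{1..n}. int (length (filter (\<lambda>I. card I = k) Is)) = amult n lam k) \<and>
     M = alpha_sum Is)"
  by (simp add: Upsilon_def alpha_sum_def)

lemma alpha_sum_Cons: "alpha_sum (I # Is) = (\<lambda>r c. alpha I r c + alpha_sum Is r c)"
  by (simp add: alpha_sum_def)

lemma triangular_sum_list:
  "\<forall>a\<in>set as. triangular n (x a) \<Longrightarrow> triangular n (\<lambda>i j. \<Sum>a\<leftarrow>as. x a i j)"
  by (induction as) (auto simp: triangular_def)

lemma triangular_alpha_sum:
  assumes "\<forall>I\<in>set Is. I \<subseteq> {1..n}"
  shows "triangular n (alpha_sum Is)"
  unfolding alpha_sum_def
proof (rule triangular_sum_list, intro ballI)
  fix I assume "I \<in> set Is"
  with assms have "col_chain n (card I) (antidiag_cols I)"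
    by (simp add: col_chain_antidiag_cols)
  then show "triangular n (alpha I)"
    unfolding alpha_eq_chain_matrix by (rule triangular_chain_matrix)
qed

lemma phi_alpha:
  "I \<subseteq> {1..n} \<Longrightarrow>
   phi n (alpha I) = (\<lambda>i j. of_bool (in_staircase (card I) (antidiag_cols I) i j))"
  unfolding alpha_eq_chain_matrix by (intro phi_chain_matrix col_chain_antidiag_cols)

lemma interlacing_phi_alpha_sum:
  assumes "\<forall>I\<in>set Is. I \<subseteq> {1..n}"
  shows "interlacing n (phi n (alpha_sum Is))"
  unfolding alpha_sum_def phi_sum_list
proof (rule interlacing_sum_list, intro ballI)
  fix I assume "I \<in> set Is"
  with assms show "interlacing n (phi n (alpha I))"
    by (simp add: phi_alpha interlacing_staircase col_chain_antidiag_cols)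
qed

lemma phi_alpha_sum_first_col:
  assumes "\<forall>I\<in>set Is. I \<subseteq> {1..n}" and "1 \<le> i"
  shows "phi n (alpha_sum Is) i 1 = int (length (filter (\<lambda>I. i \<le> card I) Is))"
proof -
  have "phi n (alpha I) i 1 = of_bool (i \<le> card I)" if "I \<in> set Is" for I
  proof -
    from that assms have ch: "col_chain n (card I) (antidiag_cols I)"
      by (simp add: col_chain_antidiag_cols)
    have "i \<le> card I \<Longrightarrow> 1 \<le> antidiag_cols I i"
      using col_chain_in_triangle[OF ch, of i] assms(2) by simp
    with that assms show ?thesis by (auto simp: phi_alpha in_staircase_def)
  qed
  then have "phi n (alpha_sum Is) i 1 = (\<Sum>I\<leftarrow>Is. of_bool (i \<le> card I))"
    unfolding alpha_sum_def phi_sum_list by (metis (mono_tags, lifting) map_eq_conv)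
  also have "\<dots> = int (length (filter (\<lambda>I. i \<le> card I) Is))"
    by (induction Is) auto
  finally show ?thesis .
qed

lemma size_counts_eq_amult_iff:
  assumes "\<forall>I\<in>set Is. card I \<le> n"
  shows "(\<forall>k\<in>{1..n}. int (length (filter (\<lambda>I. card I = k) Is)) = amult n lam k) \<longleftrightarrow>
         (\<forall>i\<in>{1..n}. int (length (filter (\<lambda>I. i \<le> card I) Is)) = lam i)"
proof -
  define ge where "ge i = int (length (filter (\<lambda>I. i \<le> card I) Is))" for i
  define eq where "eq k = int (length (filter (\<lambda>I. card I = k) Is))" for k
  have split: "ge k = eq k + ge (k + 1)" for k
    unfolding ge_def eq_def by (induction Is) auto
  have "filter (\<lambda>I. n + 1 \<le> card I) Is = []"
    using assms by (force simp: filter_empty_conv)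
  then have top: "ge (n + 1) = 0" by (simp add: ge_def)
  show ?thesis
    unfolding ge_def[symmetric] eq_def[symmetric]
  proof
    assume eq_amult: "\<forall>k\<in>{1..n}. eq k = amult n lam k"
    show "\<forall>i\<in>{1..n}. ge i = lam i"
    proof
      fix i assume i: "i \<in> {1..n}"
      then have "i \<le> n" by simp
      then show "ge i = lam i"
      proof (induction i rule: inc_induct)
        case base
        with i show ?case using split[of n] top eq_amult by (simp add: amult_def)
      next
        case (step m)
        with i show ?case using split[of m] eq_amult by (simp add: amult_def)
      qed
    qed
  next
    assume ge_lam: "\<forall>i\<in>{1..n}. ge i = lam i"
    show "\<forall>k\<in>{1..n}. eq k = amult n lam k"
    proof
      fix k assume k: "k \<in> {1..n}"
      have "ge (k + 1) = (if k = n then 0 else lam (k + 1))"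
      proof (cases "k = n")
        case False
        with k have "k + 1 \<in> {1..n}" by simp
        with False ge_lam show ?thesis by simp
      qed (use top in simp)
      moreover have "ge k = lam k" using ge_lam k by blast
      ultimately show "eq k = amult n lam k"
        using split[of k] by (simp add: amult_def)
    qed
  qed
qed

lemma phi_mem_GC_Pi: "M \<in> Upsilon n lam \<Longrightarrow> phi n M \<in> GC_Pi n lam"
proof -
  assume "M \<in> Upsilon n lam"
  then obtain Is where sub: "\<forall>I\<in>set Is. I \<subseteq> {1..n}"
    and counts: "\<forall>k\<in>{1..n}. int (length (filter (\<lambda>I. card I = k) Is)) = amult n lam k"
    and M: "M = alpha_sum Is"
    unfolding Upsilon_iff by blast
  have "\<forall>I\<in>set Is. card I \<le> n"
    using card_mono[OF finite_atLeastAtMost, of _ 1 n] sub by simp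
  with counts have "\<forall>i\<in>{1..n}. int (length (filter (\<lambda>I. i \<le> card I) Is)) = lam i"
    using size_counts_eq_amult_iff by blast
  with sub have "\<forall>i\<in>{1..n}. phi n (alpha_sum Is) i 1 = lam i"
    using phi_alpha_sum_first_col by simp
  with sub show ?thesis
    unfolding M GC_Pi_iff by (simp add: interlacing_phi_alpha_sum)
qed

lemma triangular_Upsilon: "M \<in> Upsilon n lam \<Longrightarrow> triangular n M"
proof -
  assume "M \<in> Upsilon n lam"
  then obtain Is where "\<forall>I\<in>set Is. I \<subseteq> {1..n}" "M = alpha_sum Is"
    unfolding Upsilon_iff by blast
  then show ?thesis by (simp add: triangular_alpha_sum)
qed

section \<open>From patterns to subsets\<close>

lemma interlacing_pos_in_triangle: "interlacing n P \<Longrightarrow> 0 < P i j \<Longrightarrow> in_triangle n i j"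
  using triangular_in_triangle[OF interlacing_triangular, of n P i j] by simp

lemma interlacing_pos_up_right:
  assumes P: "interlacing n P" and "1 \<le> i" and pos: "0 < P (i + 1) j"
  shows "0 < P i (j + 1)"
proof -
  have "in_triangle n (i + 1) j" using interlacing_pos_in_triangle[OF P pos] .
  with assms have "P (i + 1) j \<le> P i (j + 1)" unfolding interlacing_def by auto
  with pos show ?thesis by simp
qed

lemma interlacing_positive_support:
  assumes P: "interlacing n P" and pos: "0 < P 1 1"
  shows "\<exists>k col. 1 \<le> k \<and> col_chain n k col \<and> (\<forall>i j. 0 < P i j \<longleftrightarrow> in_staircase k col i j)"
proof -
  note tri = interlacing_pos_in_triangle[OF P]
  define rows where "rows = {i. in_triangle n i 1 \<and> 0 < P i 1}"
  define k where "k = Max rows"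
  define cols where "cols i = {j. in_triangle n i j \<and> 0 < P i j}" for i
  define col where "col i = Max (cols i)" for i
  have fin_rows: "finite rows" by (rule finite_subset[of _ "{..n}"]) (auto simp: rows_def)
  have fin_cols: "finite (cols i)" for i
    by (rule finite_subset[of _ "{..n + 1}"]) (auto simp: cols_def)
  have "1 \<in> rows" using pos tri[of 1 1] by (simp add: rows_def)
  then have k: "k \<in> rows" "1 \<le> k"
    using Max_in[OF fin_rows] Max_ge[OF fin_rows] by (auto simp: k_def)
  have col_in: "col i \<in> cols i" if "i \<in> {1..k}" for i
  proof -
    have "P k 1 \<le> P i 1" using interlacing_col_antimono[OF P, of i 1 k] that k(1)
      by (simp add: rows_def)
    with k(1) have "1 \<in> cols i" using that by (simp add: rows_def cols_def)
    then show ?thesis unfolding col_def using Max_in[OF fin_cols] by blast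
  qed
  have pos_in_staircase: "in_staircase k col i j" if "0 < P i j" for i j
  proof -
    have ij: "in_triangle n i j" using tri[OF that] .
    then have "P i j \<le> P i 1" using interlacing_row_antimono[OF P, of i 1 j] by simp
    with that ij have "i \<in> rows" by (simp add: rows_def)
    moreover have "j \<in> cols i" using that ij by (simp add: cols_def)
    ultimately show ?thesis using Max_ge[OF fin_rows] Max_ge[OF fin_cols] ij
      by (simp add: in_staircase_def k_def col_def)
  qed
  have staircase_pos: "0 < P i j" if "in_staircase k col i j" for i j
  proof -
    have i: "i \<in> {1..k}" and j: "1 \<le> j" "j \<le> col i"
      using that by (auto simp: in_staircase_def)
    then have "P i (col i) \<le> P i j"
      using interlacing_row_antimono[OF P, of i j "col i"] col_in[OF i] by (simp add: cols_def)
    with col_in[OF i] show ?thesis by (simp add: cols_def)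
  qed
  have "col (r + 1) < col r" if "1 \<le> r" "r < k" for r
  proof -
    have "col (r + 1) \<in> cols (r + 1)" using col_in that by simp
    then have "0 < P r (col (r + 1) + 1)"
      using interlacing_pos_up_right[OF P \<open>1 \<le> r\<close>] by (simp add: cols_def)
    then have "col (r + 1) + 1 \<in> cols r" using tri[of r "col (r + 1) + 1"] by (simp add: cols_def)
    then show ?thesis using Max_ge[OF fin_cols] by (fastforce simp: col_def)
  qed
  with col_in have "col_chain n k col" by (auto simp: col_chain_def cols_def)
  with k(2) pos_in_staircase staircase_pos show ?thesis by blast
qed

lemma interlacing_decrement_positive:
  assumes P: "interlacing n P"
  shows "interlacing n (\<lambda>i j. P i j - of_bool (0 < P i j))"
proof -
  have mono: "x - of_bool (0 < x) \<le> y - of_bool (0 < y)" if "x \<le> y" for x y :: int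
    using that by auto
  have "triangular n (\<lambda>i j. P i j - of_bool (0 < P i j))"
    using interlacing_triangular[OF P] by (simp add: triangular_def)
  moreover have "P i (j + 1) - of_bool (0 < P i (j + 1)) \<le> P i j - of_bool (0 < P i j) \<and>
      P (i + 1) j - of_bool (0 < P (i + 1) j) \<le> P i (j + 1) - of_bool (0 < P i (j + 1))"
    if "1 \<le> i \<and> 1 \<le> j \<and> i + j + 1 \<le> n + 1" for i j
    using P that unfolding interlacing_def by (blast intro: mono)
  ultimately show ?thesis by (simp add: interlacing_def)
qed

lemma interlacing_nonpos_corner:
  assumes P: "interlacing n P" and nonneg: "\<forall>i j. 0 \<le> P i j" and "P 1 1 \<le> 0"
  shows "P = (\<lambda>_ _. 0)"
proof (intro ext)
  fix i j
  show "P i j = 0"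
  proof (cases "in_triangle n i j")
    case True
    with interlacing_le_corner[OF P True] assms(3) nonneg[rule_format, of i j] show ?thesis
      by linarith
  qed (use interlacing_triangular[OF P] in \<open>simp add: triangular_def\<close>)
qed

lemma positive_support_eq_phi_alpha:
  assumes P: "interlacing n P" and pos: "0 < P 1 1"
  shows "\<exists>I. I \<noteq> {} \<and> I \<subseteq> {1..n} \<and> phi n (alpha I) = (\<lambda>i j. of_bool (0 < P i j))"
proof -
  obtain k col where k: "1 \<le> k" and ch: "col_chain n k col"
    and supp: "\<forall>i j. 0 < P i j \<longleftrightarrow> in_staircase k col i j"
    using interlacing_positive_support[OF P pos] by blast
  have "phi n (alpha (col ` {1..k})) = (\<lambda>i j. of_bool (0 < P i j))"
    unfolding col_chain_image(2)[OF ch] phi_chain_matrix[OF ch] using supp by simp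
  with k col_chain_image(1)[OF ch] show ?thesis by (intro exI[of _ "col ` {1..k}"]) simp
qed

lemma interlacing_eq_phi_alpha_sum:
  assumes "interlacing n P" and "\<forall>i j. 0 \<le> P i j"
  shows "\<exists>Is. (\<forall>I\<in>set Is. I \<noteq> {} \<and> I \<subseteq> {1..n}) \<and> phi n (alpha_sum Is) = P"
  using assms
proof (induction "nat (P 1 1)" arbitrary: P rule: less_induct)
  case less
  note P = less.prems(1) and nonneg = less.prems(2)
  show ?case
  proof (cases "0 < P 1 1")
    case False
    then have "P = (\<lambda>_ _. 0)" using interlacing_nonpos_corner[OF P nonneg] by simp
    then have "phi n (alpha_sum []) = P" by (simp add: alpha_sum_def phi_def fun_eq_iff)
    then show ?thesis by (intro exI[of _ "[]"]) simp
  next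
    case True
    then obtain I where I: "I \<noteq> {}" "I \<subseteq> {1..n}"
      and phi_I: "phi n (alpha I) = (\<lambda>i j. of_bool (0 < P i j))"
      using positive_support_eq_phi_alpha[OF P] by blast
    define P' where "P' = (\<lambda>i j. P i j - of_bool (0 < P i j))"
    have "interlacing n P'"
      unfolding P'_def by (rule interlacing_decrement_positive[OF P])
    moreover have "\<forall>i j. 0 \<le> P' i j" using nonneg by (simp add: P'_def)
    moreover have "nat (P' 1 1) < nat (P 1 1)" using True by (simp add: P'_def)
    ultimately obtain Is where Is: "\<forall>I\<in>set Is. I \<noteq> {} \<and> I \<subseteq> {1..n}"
      "phi n (alpha_sum Is) = P'"
      using less.hyps by blast
    have "phi n (alpha_sum (I # Is)) = P"
      by (simp add: alpha_sum_Cons phi_add phi_I Is(2) P'_def)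
    with I Is(1) show ?thesis by (intro exI[of _ "I # Is"]) simp
  qed
qed

lemma GC_Pi_mem_image_phi:
  assumes nonneg: "1 \<le> n \<longrightarrow> 0 \<le> lam n" and "P \<in> GC_Pi n lam"
  shows "P \<in> phi n ` Upsilon n lam"
proof -
  have P: "interlacing n P" and first_col: "\<forall>i\<in>{1..n}. P i 1 = lam i"
    using assms(2) by (simp_all add: GC_Pi_iff)
  then have "\<forall>i j. 0 \<le> P i j" using nonneg by (simp add: interlacing_nonneg)
  with P obtain Is where sets: "\<forall>I\<in>set Is. I \<noteq> {} \<and> I \<subseteq> {1..n}"
    and P_eq: "phi n (alpha_sum Is) = P"
    using interlacing_eq_phi_alpha_sum by blast
  have "\<forall>i\<in>{1..n}. int (length (filter (\<lambda>I. i \<le> card I) Is)) = lam i"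
    using phi_alpha_sum_first_col[of Is n] sets first_col P_eq by auto
  moreover have "\<forall>I\<in>set Is. card I \<le> n"
    using card_mono[OF finite_atLeastAtMost, of _ 1 n] sets by simp
  ultimately have "\<forall>k\<in>{1..n}. int (length (filter (\<lambda>I. card I = k) Is)) = amult n lam k"
    using size_counts_eq_amult_iff by blast
  with sets have "alpha_sum Is \<in> Upsilon n lam" unfolding Upsilon_iff by blast
  with P_eq show ?thesis by blast
qed

theorem mainTheorem5:
  fixes n :: nat and lam :: "nat \<Rightarrow> int"
  assumes dom: "\<forall>i. 1 \<le> i \<and> i < n \<longrightarrow> lam i \<ge> lam (i + 1)"
    and nonneg: "n \<ge> 1 \<longrightarrow> lam n \<ge> 0"
  shows "bij_betw (phi n) (Upsilon n lam) (GC_Pi n lam) \<and>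
         inj_on (phi n) (conv_arr (realarr ` Upsilon n lam)) \<and>
         phi n ` conv_arr (realarr ` Upsilon n lam) = conv_arr (realarr ` GC_Pi n lam)"
proof (intro conjI)
  have phi_Ups: "phi n ` Upsilon n lam = GC_Pi n lam"
    using phi_mem_GC_Pi GC_Pi_mem_image_phi[of n lam, OF nonneg] by blast
  have "Upsilon n lam \<subseteq> {x. triangular n x}" using triangular_Upsilon by blast
  then show "bij_betw (phi n) (Upsilon n lam) (GC_Pi n lam)"
    unfolding bij_betw_def phi_Ups by (simp add: inj_on_subset[OF inj_on_phi_triangular])
  have "\<forall>p\<in>realarr ` Upsilon n lam. triangular n p"
    by (auto intro: triangular_realarr triangular_Upsilon)
  then have "conv_arr (realarr ` Upsilon n lam) \<subseteq> {x. triangular n x}"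
    using conv_arr_triangular by blast
  then show "inj_on (phi n) (conv_arr (realarr ` Upsilon n lam))"
    by (rule inj_on_subset[OF inj_on_phi_triangular])
  have "phi n ` realarr ` Upsilon n lam = realarr ` GC_Pi n lam"
    by (simp add: image_image phi_realarr flip: phi_Ups)
  then show "phi n ` conv_arr (realarr ` Upsilon n lam) = conv_arr (realarr ` GC_Pi n lam)"
    by (simp add: conv_arr_linear_image phi_lincomb)
qed

end
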